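(* Suppose condition (iv) of the context holds. Set $\theta_*:=d(2\alpha\beta-1)-2\beta$; let $\theta>\min\{\theta_*,s-2\beta\}$ if $\theta_*\ge0$, and $\theta=0$ otherwise. Then there exists $C>0$, independent of $h$, such that \[ \|(L^{-\beta}-L_h^{-\beta}\Pi_h)g\|_H\le C h^{\min\{d(2\alpha\beta-1),s\}}\|g\|_\theta \] for all $g\in\dot H^\theta$ and all sufficiently small $h\in(0,h_0)$.
   Context: $H$ is a separable real Hilbert space; $L\colon\mathscr{D}(L)\subset H\to H$ densely defined, self-adjoint, positive definite with compact inverse, $H$-orthonormal eigenvectors $\{e_j\}$, nondecreasing eigenvalues $\{\lambda_j\}$ with $c_\lambda j^\alpha\le\lambda_j\le C_\lambda j^\alpha$ ($\alpha,c_\lambda,C_\lambda>0$); $(S(t))_{t\ge0}$ the semigroup generated by $-L$. $\beta\in(0,1)$ and $2\alpha\beta>1$; $d\in\mathbb{N}$ is fixed (the exponent with $\dim V_h\propto h^{-d}$). For $\sigma\ge0$, $\dot H^\sigma:=\mathscr{D}(L^{\sigma/2})$ with $\|\psi\|_\sigma^2=\sum_j\lambda_j^\sigma(\psi,e_j)_H^2$. $(V_h)_{h\in(0,1)}$ are finite-dimensional subspaces of $\dot H^1$, $\Pi_h$ the $H$-orthogonal projection onto $V_h$, $L_h\colon V_h\to V_h$ given by $(L_h\psi_h,\phi_h)_H=\langle L\psi_h,\phi_h\rangle$, $(S_h(t))$ the semigroup on $V_h$ generated by $-L_h$. Condition (iv): there are $h_0\in(0,1)$ and $s>2\beta$ such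 that for $0\le\theta\le\sigma\le s$ there is $C_3>0$ with $\|(S(t)-S_h(t)\Pi_h)g\|_H\le C_3h^\sigma t^{(\theta-\sigma)/2}\|g\|_\theta$ for all $t>0$, $g\in\dot H^\theta$, $h\in(0,h_0)$. *)

theory Defs
  imports "HOL-Analysis.Analysis"
begin

text \<open>Spectral model: the operator L is given by its H-orthonormal eigenbasis e
  (indexed from 0, so e j is the paper's e_(j+1)) and eigenvalues lam.\<close>

definition hdot_mem :: "(nat \<Rightarrow> real) \<Rightarrow> (nat \<Rightarrow> 'a::real_inner) \<Rightarrow> real \<Rightarrow> 'a \<Rightarrow> bool" where
  "hdot_mem lam e \<sigma> x \<longleftrightarrow> summable (\<lambda>j. lam j powr \<sigma> * (x \<bullet> e j)\<^sup>2)"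

definition hdot_norm :: "(nat \<Rightarrow> real) \<Rightarrow> (nat \<Rightarrow> 'a::real_inner) \<Rightarrow> real \<Rightarrow> 'a \<Rightarrow> real" where
  "hdot_norm lam e \<sigma> x = sqrt (\<Sum>j. lam j powr \<sigma> * (x \<bullet> e j)\<^sup>2)"

definition L_pow :: "(nat \<Rightarrow> real) \<Rightarrow> (nat \<Rightarrow> 'a::{real_inner,complete_space}) \<Rightarrow> real \<Rightarrow> 'a \<Rightarrow> 'a" where
  "L_pow lam e r x = (\<Sum>j. (lam j powr r * (x \<bullet> e j)) *\<^sub>R e j)"

definition S_sg :: "(nat \<Rightarrow> real) \<Rightarrow> (nat \<Rightarrow> 'a::{real_inner,complete_space}) \<Rightarrow> real \<Rightarrow> 'a \<Rightarrow> 'a" where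
  "S_sg lam e t x = (\<Sum>j. (exp (- t * lam j) * (x \<bullet> e j)) *\<^sub>R e j)"

definition aform :: "(nat \<Rightarrow> real) \<Rightarrow> (nat \<Rightarrow> 'a::real_inner) \<Rightarrow> 'a \<Rightarrow> 'a \<Rightarrow> real" where
  "aform lam e x y = (\<Sum>j. lam j * (x \<bullet> e j) * (y \<bullet> e j))"

definition proj :: "'a::real_inner set \<Rightarrow> 'a \<Rightarrow> 'a" where
  "proj V x = (THE p. p \<in> V \<and> (\<forall>v\<in>V. (x - p) \<bullet> v = 0))"

definition L_h :: "(nat \<Rightarrow> real) \<Rightarrow> (nat \<Rightarrow> 'a::real_inner) \<Rightarrow> 'a set \<Rightarrow> 'a \<Rightarrow> 'a" where
  "L_h lam e V x = (THE y. y \<in> V \<and> (\<forall>\<phi>\<in>V. y \<bullet> \<phi> = aform lam e x \<phi>))"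

definition Lh_eigvals :: "(nat \<Rightarrow> real) \<Rightarrow> (nat \<Rightarrow> 'a::real_inner) \<Rightarrow> 'a set \<Rightarrow> real set" where
  "Lh_eigvals lam e V = {\<mu>. \<exists>v\<in>V. v \<noteq> 0 \<and> L_h lam e V v = \<mu> *\<^sub>R v}"

definition Lh_eigspace :: "(nat \<Rightarrow> real) \<Rightarrow> (nat \<Rightarrow> 'a::real_inner) \<Rightarrow> 'a set \<Rightarrow> real \<Rightarrow> 'a set" where
  "Lh_eigspace lam e V \<mu> = {v\<in>V. L_h lam e V v = \<mu> *\<^sub>R v}"

text \<open>Functional calculus of the self-adjoint L_h on V_h via its spectral decomposition:
  L_h^r x = sum over eigenvalues mu of mu^r P_mu x; S_h(t) x = sum exp(-t mu) P_mu x.\<close>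
definition Lh_pow :: "(nat \<Rightarrow> real) \<Rightarrow> (nat \<Rightarrow> 'a::real_inner) \<Rightarrow> 'a set \<Rightarrow> real \<Rightarrow> 'a \<Rightarrow> 'a" where
  "Lh_pow lam e V r x = (\<Sum>\<mu>\<in>Lh_eigvals lam e V. (\<mu> powr r) *\<^sub>R proj (Lh_eigspace lam e V \<mu>) x)"

definition Sh_sg :: "(nat \<Rightarrow> real) \<Rightarrow> (nat \<Rightarrow> 'a::real_inner) \<Rightarrow> 'a set \<Rightarrow> real \<Rightarrow> 'a \<Rightarrow> 'a" where
  "Sh_sg lam e V t x = (\<Sum>\<mu>\<in>Lh_eigvals lam e V. exp (- t * \<mu>) *\<^sub>R proj (Lh_eigspace lam e V \<mu>) x)"

end

theory Submission
  imports Defs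
begin

(* Both fractional powers have the Balakrishnan representation
     L^(-beta) = Gamma(beta)^(-1) * integral over (0,oo) of t^(beta-1) S(t) dt,
   and likewise for L_h on V_h, whose eigenvalues are positive because the form of L is coercive.
   Hence the error is at most Gamma(beta)^(-1) times the integral of
   t^(beta-1) * norm ((S(t) - S_h(t) Pi_h) g).  Put r = min (d(2 alpha beta - 1)) s.  For t <= 1,
   condition (iv) with smoothness min theta r and order r bounds the integrand by a multiple of
   h^r t^(beta - 1 + (min theta r - r)/2), integrable at 0 since theta > r - 2 beta; for t > 1,
   (iv) with smoothness 0 and order s gives h^s t^(beta - 1 - s/2) <= h^r t^(beta - 1 - s/2),
   integrable at infinity since s > 2 beta.  Vector-valued integrals are avoided by pairing
   both representations with the error itself. *)

section \<open>Orthonormal expansions\<close>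

lemma abs_mult_le_sum_squares: "\<bar>(a::real) * b\<bar> \<le> a\<^sup>2 + b\<^sup>2"
proof -
  have "2 * \<bar>a\<bar> * \<bar>b\<bar> \<le> a\<^sup>2 + b\<^sup>2"
    using sum_squares_bound[of "\<bar>a\<bar>" "\<bar>b\<bar>"] by simp
  moreover have "0 \<le> \<bar>a\<bar> * \<bar>b\<bar>" by simp
  ultimately show ?thesis by (simp only: abs_mult)
qed

lemma norm_sum_orthonormal_squared:
  fixes e :: "nat \<Rightarrow> 'a::real_inner"
  assumes orthonormal: "\<And>i j. e i \<bullet> e j = (if i = j then 1 else 0)" and "finite A"
  shows "(norm (\<Sum>j\<in>A. c j *\<^sub>R e j))\<^sup>2 = (\<Sum>j\<in>A. (c j)\<^sup>2)"
proof -
  have "(norm (\<Sum>j\<in>A. c j *\<^sub>R e j))\<^sup>2 = (\<Sum>j\<in>A. c j *\<^sub>R e j) \<bullet> (\<Sum>j\<in>A. c j *\<^sub>R e j)"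
    by (simp add: power2_norm_eq_inner)
  also have "\<dots> = (\<Sum>j\<in>A. (c j)\<^sup>2)"
    using \<open>finite A\<close>
    by (simp add: inner_sum_left inner_sum_right orthonormal power2_eq_square if_distrib cong: if_cong)
  finally show ?thesis .
qed

lemma summable_orthonormal_series:
  fixes e :: "nat \<Rightarrow> 'a::{real_inner,complete_space}"
  assumes orthonormal: "\<And>i j. e i \<bullet> e j = (if i = j then 1 else 0)"
    and square_summable: "summable (\<lambda>j. (c j)\<^sup>2)"
  shows "summable (\<lambda>j. c j *\<^sub>R e j)"
  unfolding summable_iff_convergent Cauchy_convergent_iff[symmetric]
proof (rule CauchyI)
  fix r :: real assume "r > 0"
  then obtain N where N: "\<And>m n. m \<ge> N \<Longrightarrow> norm (\<Sum>j = m..<n. (c j)\<^sup>2) < r\<^sup>2"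
    using square_summable unfolding summable_Cauchy by (metis zero_less_power)
  have tail: "norm (\<Sum>j = m..<n. c j *\<^sub>R e j) < r" if "m \<ge> N" for m n
  proof -
    have "(norm (\<Sum>j = m..<n. c j *\<^sub>R e j))\<^sup>2 < r\<^sup>2"
      using N[OF that, of n] norm_sum_orthonormal_squared[OF orthonormal, of "{m..<n}" c]
      by (simp add: sum_nonneg)
    then show ?thesis using \<open>r > 0\<close> by (simp add: power_less_imp_less_base)
  qed
  have partial_diff: "(\<Sum>j<n. c j *\<^sub>R e j) - (\<Sum>j<m. c j *\<^sub>R e j) = (\<Sum>j = m..<n. c j *\<^sub>R e j)"
    if "m \<le> n" for m n
    using sum_diff_nat_ivl[OF le0 that, of "\<lambda>j. c j *\<^sub>R e j"] by (simp add: atLeast0LessThan)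
  have "norm ((\<Sum>j<m. c j *\<^sub>R e j) - (\<Sum>j<n. c j *\<^sub>R e j)) < r" if "m \<ge> N" "n \<ge> N" for m n
  proof (cases "m \<le> n")
    case True
    then show ?thesis using tail[OF that(1), of n] partial_diff[OF True] by (metis norm_minus_commute)
  next
    case False
    then show ?thesis using tail[OF that(2), of m] partial_diff[of n m] by simp
  qed
  then show "\<exists>M. \<forall>m\<ge>M. \<forall>n\<ge>M. norm ((\<Sum>j<m. c j *\<^sub>R e j) - (\<Sum>j<n. c j *\<^sub>R e j)) < r"
    by blast
qed

lemma sums_inner_squares_orthonormal:
  fixes e :: "nat \<Rightarrow> 'a::real_inner"
  assumes orthonormal: "\<And>i j. e i \<bullet> e j = (if i = j then 1 else 0)"
    and expansion: "(\<lambda>j. (x \<bullet> e j) *\<^sub>R e j) sums x"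
  shows "(\<lambda>j. (x \<bullet> e j)\<^sup>2) sums (norm x)\<^sup>2"
proof -
  have "(\<lambda>n. (norm (\<Sum>j<n. (x \<bullet> e j) *\<^sub>R e j))\<^sup>2) \<longlonglongrightarrow> (norm x)\<^sup>2"
    using expansion unfolding sums_def by (intro tendsto_intros)
  then show ?thesis
    unfolding sums_def by (simp add: norm_sum_orthonormal_squared[OF orthonormal])
qed

lemma summable_abs_coeff_products:
  fixes e :: "nat \<Rightarrow> 'a::real_inner"
  assumes orthonormal: "\<And>i j. e i \<bullet> e j = (if i = j then 1 else 0)"
    and complete: "\<And>x. (\<lambda>j. (x \<bullet> e j) *\<^sub>R e j) sums x"
  shows "summable (\<lambda>j. \<bar>(x \<bullet> e j) * (y \<bullet> e j)\<bar>)"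
proof (rule summable_comparison_test')
  show "summable (\<lambda>j. (x \<bullet> e j)\<^sup>2 + (y \<bullet> e j)\<^sup>2)"
    using sums_inner_squares_orthonormal[OF orthonormal complete]
    by (intro summable_add) (auto intro: sums_summable)
  show "norm \<bar>(x \<bullet> e j) * (y \<bullet> e j)\<bar> \<le> (x \<bullet> e j)\<^sup>2 + (y \<bullet> e j)\<^sup>2" for j
    using abs_mult_le_sum_squares by simp
qed

lemma sums_inner_orthonormal_multiplier:
  fixes e :: "nat \<Rightarrow> 'a::{real_inner,complete_space}"
  assumes orthonormal: "\<And>i j. e i \<bullet> e j = (if i = j then 1 else 0)"
    and complete: "\<And>x. (\<lambda>j. (x \<bullet> e j) *\<^sub>R e j) sums x"
    and bounded: "\<And>j. \<bar>m j\<bar> \<le> K"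
  shows "(\<lambda>j. m j * ((x \<bullet> e j) * (y \<bullet> e j))) sums ((\<Sum>j. (m j * (x \<bullet> e j)) *\<^sub>R e j) \<bullet> y)"
proof -
  have "summable (\<lambda>j. (m j * (x \<bullet> e j))\<^sup>2)"
  proof (rule summable_comparison_test')
    show "summable (\<lambda>j. K\<^sup>2 * (x \<bullet> e j)\<^sup>2)"
      using sums_inner_squares_orthonormal[OF orthonormal complete]
      by (intro summable_mult) (rule sums_summable)
    show "norm ((m j * (x \<bullet> e j))\<^sup>2) \<le> K\<^sup>2 * (x \<bullet> e j)\<^sup>2" for j
      using power_mono[OF bounded[of j] abs_ge_zero, of 2]
      by (simp add: power_mult_distrib mult_right_mono)
  qed
  then have "(\<lambda>j. (m j * (x \<bullet> e j)) *\<^sub>R e j) sums (\<Sum>j. (m j * (x \<bullet> e j)) *\<^sub>R e j)"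
    by (intro summable_sums summable_orthonormal_series[OF orthonormal])
  from bounded_linear.sums[OF bounded_linear_inner_left this, of y] show ?thesis
    by (simp add: mult.assoc inner_commute[of _ y])
qed

section \<open>The discrete operator\<close>

lemma inner_Gram_Schmidt_residual:
  fixes Q :: "'a::real_inner set"
  assumes "finite Q" and orth: "pairwise orthogonal Q" and "b \<in> Q"
  shows "(a - (\<Sum>u\<in>Q. (u \<bullet> a / (u \<bullet> u)) *\<^sub>R u)) \<bullet> b = 0"
proof -
  have "((u \<bullet> a / (u \<bullet> u)) *\<^sub>R u) \<bullet> b = (if u = b then b \<bullet> a else 0)" if "u \<in> Q" for u
    using orth that \<open>b \<in> Q\<close> by (auto simp: pairwise_def orthogonal_def)
  then have "(\<Sum>u\<in>Q. (u \<bullet> a / (u \<bullet> u)) *\<^sub>R u) \<bullet> b = b \<bullet> a"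
    using assms by (simp add: inner_sum_left cong: sum.cong)
  then show ?thesis by (simp add: inner_diff_left inner_commute[of a b])
qed

lemma finite_orthogonal_spanningset_exists:
  fixes B :: "'a::real_inner set"
  assumes "finite B"
  shows "\<exists>Q. finite Q \<and> pairwise orthogonal Q \<and> span Q = span B"
  using assms
proof (induction B rule: finite_induct)
  case empty
  show ?case by (intro exI[of _ "{}"]) auto
next
  case (insert a B)
  then obtain Q where Q: "finite Q" "pairwise orthogonal Q" "span Q = span B" by blast
  define a' where "a' = a - (\<Sum>u\<in>Q. (u \<bullet> a / (u \<bullet> u)) *\<^sub>R u)"
  have "pairwise orthogonal (insert a' Q)"
    using Q inner_Gram_Schmidt_residual by (intro pairwise_orthogonal_insert) (auto simp: orthogonal_def a'_def)
  moreover have "span (insert a' Q) = span (insert a B)"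
  proof -
    have "a' - a \<in> span Q" unfolding a'_def by (simp add: span_neg span_sum span_mul span_base)
    then have "span (insert a' Q) = span (insert a Q)" by (rule eq_span_insert_eq)
    then show ?thesis using Q(3) by (simp add: span_insert)
  qed
  ultimately show ?case using Q(1) by blast
qed

lemma orthogonal_expansion_in_span:
  fixes Q :: "'a::real_inner set"
  assumes "finite Q" "pairwise orthogonal Q" "\<phi> \<in> span Q"
  shows "\<phi> = (\<Sum>u\<in>Q. (\<phi> \<bullet> u / (u \<bullet> u)) *\<^sub>R u)"
proof -
  define r where "r = \<phi> - (\<Sum>u\<in>Q. (u \<bullet> \<phi> / (u \<bullet> u)) *\<^sub>R u)"
  have "r \<in> span Q" unfolding r_def using assms(3)
    by (simp add: span_diff span_sum span_mul span_base)
  moreover have "orthogonal r b" if "b \<in> Q" for b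
    using inner_Gram_Schmidt_residual[OF assms(1,2) that] by (simp add: r_def orthogonal_def)
  ultimately have "orthogonal r r" by (metis orthogonal_to_span)
  then show ?thesis by (simp add: r_def orthogonal_def inner_commute)
qed

lemma summable_aform_terms:
  fixes e :: "nat \<Rightarrow> 'a::real_inner"
  assumes pos: "\<And>j. lam j > 0" and "hdot_mem lam e 1 x" "hdot_mem lam e 1 y"
  shows "summable (\<lambda>j. lam j * (x \<bullet> e j) * (y \<bullet> e j))"
proof (rule summable_comparison_test')
  show "summable (\<lambda>j. lam j * (x \<bullet> e j)\<^sup>2 + lam j * (y \<bullet> e j)\<^sup>2)"
    using assms by (intro summable_add) (simp_all add: hdot_mem_def abs_of_pos less_imp_le)
  show "norm (lam j * (x \<bullet> e j) * (y \<bullet> e j)) \<le> lam j * (x \<bullet> e j)\<^sup>2 + lam j * (y \<bullet> e j)\<^sup>2" for j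
    using mult_left_mono[OF abs_mult_le_sum_squares[of "x \<bullet> e j" "y \<bullet> e j"], of "lam j"] pos[of j]
    by (simp add: abs_mult algebra_simps)
qed

lemma aform_sum_right:
  fixes e :: "nat \<Rightarrow> 'a::real_inner"
  assumes pos: "\<And>j. lam j > 0" and v: "hdot_mem lam e 1 v"
    and Q: "\<And>u. u \<in> Q \<Longrightarrow> hdot_mem lam e 1 u"
  shows "aform lam e v (\<Sum>u\<in>Q. c u *\<^sub>R u) = (\<Sum>u\<in>Q. c u * aform lam e v u)"
proof -
  have "aform lam e v (\<Sum>u\<in>Q. c u *\<^sub>R u) = (\<Sum>j. \<Sum>u\<in>Q. c u * (lam j * (v \<bullet> e j) * (u \<bullet> e j)))"
    unfolding aform_def by (simp add: inner_sum_left sum_distrib_left mult.commute mult.left_commute)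
  also have "\<dots> = (\<Sum>u\<in>Q. \<Sum>j. c u * (lam j * (v \<bullet> e j) * (u \<bullet> e j)))"
    by (rule suminf_sum) (intro summable_mult summable_aform_terms[OF pos v Q])
  also have "\<dots> = (\<Sum>u\<in>Q. c u * aform lam e v u)"
    unfolding aform_def by (intro sum.cong refl suminf_mult summable_aform_terms[OF pos v Q])
  finally show ?thesis .
qed

lemma L_h_characterization:
  fixes e :: "nat \<Rightarrow> 'a::real_inner"
  assumes pos: "\<And>j. lam j > 0" and "finite B" and H1: "span B \<subseteq> {x. hdot_mem lam e 1 x}"
    and v: "v \<in> span B"
  shows "L_h lam e (span B) v \<in> span B \<and> (\<forall>\<phi>\<in>span B. L_h lam e (span B) v \<bullet> \<phi> = aform lam e v \<phi>)"
proof -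
  obtain Q where Q: "finite Q" "pairwise orthogonal Q" "span Q = span B"
    using finite_orthogonal_spanningset_exists[OF \<open>finite B\<close>] by blast
  have QH1: "hdot_mem lam e 1 u" if "u \<in> Q" for u
    using H1 Q(3) span_base[OF that] by auto
  have vH1: "hdot_mem lam e 1 v" using H1 v by auto
  define y where "y = (\<Sum>u\<in>Q. (aform lam e v u / (u \<bullet> u)) *\<^sub>R u)"
  have y_span: "y \<in> span B" unfolding y_def Q(3)[symmetric]
    by (simp add: span_sum span_mul span_base)
  have y_repr: "y \<bullet> \<phi> = aform lam e v \<phi>" if "\<phi> \<in> span B" for \<phi>
  proof -
    have "\<phi> = (\<Sum>u\<in>Q. (\<phi> \<bullet> u / (u \<bullet> u)) *\<^sub>R u)"
      using orthogonal_expansion_in_span[OF Q(1,2)] that Q(3) by blast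
    then have "aform lam e v \<phi> = (\<Sum>u\<in>Q. (\<phi> \<bullet> u / (u \<bullet> u)) * aform lam e v u)"
      using aform_sum_right[OF pos vH1 QH1] by metis
    also have "\<dots> = y \<bullet> \<phi>"
      unfolding y_def inner_sum_left by (simp add: inner_commute mult.commute)
    finally show ?thesis by simp
  qed
  have "z = y" if "z \<in> span B" "\<forall>\<phi>\<in>span B. z \<bullet> \<phi> = aform lam e v \<phi>" for z
  proof -
    have "z - y \<in> span B" using that(1) y_span by (simp add: span_diff)
    then have "(z - y) \<bullet> (z - y) = 0"
      using that(2) y_repr by (simp add: inner_diff_left)
    then show ?thesis by simp
  qed
  then have "\<exists>!z. z \<in> span B \<and> (\<forall>\<phi>\<in>span B. z \<bullet> \<phi> = aform lam e v \<phi>)"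
    using y_span y_repr by blast
  then show ?thesis unfolding L_h_def by (rule theI')
qed

lemma Lh_eigval_pos:
  fixes e :: "nat \<Rightarrow> 'a::real_inner"
  assumes pos: "\<And>j. lam j > 0" and "finite B" and H1: "span B \<subseteq> {x. hdot_mem lam e 1 x}"
    and complete: "\<And>x. (\<lambda>j. (x \<bullet> e j) *\<^sub>R e j) sums x"
    and "\<mu> \<in> Lh_eigvals lam e (span B)"
  shows "\<mu> > 0"
proof -
  obtain v where v: "v \<in> span B" "v \<noteq> 0" "L_h lam e (span B) v = \<mu> *\<^sub>R v"
    using assms(5) unfolding Lh_eigvals_def by blast
  have vH1: "hdot_mem lam e 1 v" using H1 v by auto
  have "\<exists>j. v \<bullet> e j \<noteq> 0"
  proof (rule ccontr)
    assume "\<nexists>j. v \<bullet> e j \<noteq> 0"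
    then have "(\<lambda>j. 0) sums v" using complete[of v] by simp
    then show False using v(2) sums_zero sums_unique2 by blast
  qed
  then obtain j where j: "v \<bullet> e j \<noteq> 0" ..
  have "\<mu> * (v \<bullet> v) = aform lam e v v"
    using L_h_characterization[OF pos \<open>finite B\<close> H1 v(1)] v by auto
  also have "aform lam e v v > 0"
    unfolding aform_def
  proof (rule suminf_pos2)
    show "summable (\<lambda>j. lam j * (v \<bullet> e j) * (v \<bullet> e j))" by (rule summable_aform_terms[OF pos vH1 vH1])
    show "0 \<le> lam n * (v \<bullet> e n) * (v \<bullet> e n)" for n using pos[of n] by (simp add: mult.assoc)
    show "0 < lam j * (v \<bullet> e j) * (v \<bullet> e j)" using pos[of j] j by (simp add: mult.assoc zero_less_mult_iff) linarith
  qed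
  finally have "\<mu> * (v \<bullet> v) > 0" .
  moreover have "v \<bullet> v > 0" using v(2) by simp
  ultimately show ?thesis by (simp add: zero_less_mult_iff)
qed

section \<open>Balakrishnan representation\<close>

lemma has_bochner_integral_Gamma_kernel:
  fixes b l :: real
  assumes "b > 0" "l > 0"
  shows "has_bochner_integral lborel (\<lambda>t. indicator {0<..} t * t powr (b - 1) * exp (- t * l))
           (Gamma b * l powr (- b))"
proof (rule has_bochner_integral_nn_integral)
  define f where "f = (\<lambda>t::real. ennreal (indicator {0..} t * t powr (b - 1) / exp t))"
  define \<kappa> where "\<kappa> = (\<lambda>t::real. indicator {0<..} t * t powr (b - 1) * exp (- t * l))"
  have \<kappa>_measurable: "\<kappa> \<in> borel_measurable lborel" unfolding \<kappa>_def by measurable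
  have scaled: "f (l * t) = ennreal (l powr (b - 1)) * ennreal (\<kappa> t)" for t
  proof (cases "t > 0")
    case True
    then show ?thesis using \<open>l > 0\<close>
      by (simp add: f_def \<kappa>_def ennreal_mult'[symmetric] powr_mult exp_minus divide_inverse mult_ac)
  next
    case False
    then have "indicator {0..} (l * t) * (l * t) powr (b - 1) = (0::real)"
      using \<open>l > 0\<close> by (cases "t = 0") (auto simp: indicator_def zero_le_mult_iff)
    then show ?thesis using False by (simp add: f_def \<kappa>_def)
  qed
  have "ennreal (Gamma b) = (\<integral>\<^sup>+t. f t \<partial>lborel)"
    using Gamma_conv_nn_integral_real[OF \<open>b > 0\<close>] by (simp add: f_def)
  also have "\<dots> = ennreal l * (\<integral>\<^sup>+t. f (0 + l * t) \<partial>lborel)"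
    using nn_integral_real_affine[of f l 0] \<open>l > 0\<close> by (simp add: f_def)
  also have "\<dots> = ennreal l * ennreal (l powr (b - 1)) * (\<integral>\<^sup>+t. ennreal (\<kappa> t) \<partial>lborel)"
    using \<kappa>_measurable by (simp add: scaled nn_integral_cmult mult.assoc)
  also have "ennreal l * ennreal (l powr (b - 1)) = ennreal (l powr b)"
    using \<open>l > 0\<close> by (simp add: ennreal_mult'[symmetric] powr_diff)
  finally have "ennreal (l powr (- b)) * ennreal (Gamma b) = (\<integral>\<^sup>+t. ennreal (\<kappa> t) \<partial>lborel)"
    using \<open>l > 0\<close> by (simp add: mult.assoc[symmetric] ennreal_mult'[symmetric] powr_add[symmetric])
  then show "(\<integral>\<^sup>+t. ennreal (\<kappa> t) \<partial>lborel) = ennreal (Gamma b * l powr (- b))"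
    using \<open>b > 0\<close> by (simp add: ennreal_mult' Gamma_real_pos less_imp_le mult.commute)
  show "\<kappa> \<in> borel_measurable lborel" by (fact \<kappa>_measurable)
  show "AE t in lborel. 0 \<le> \<kappa> t" by (simp add: \<kappa>_def)
  show "0 \<le> Gamma b * l powr (- b)" using assms by (simp add: Gamma_real_pos less_imp_le)
qed

lemma has_bochner_integral_Balakrishnan_sum:
  fixes P :: "real \<Rightarrow> 'a::real_inner"
  assumes "\<beta> > 0" and pos: "\<And>\<mu>. \<mu> \<in> M \<Longrightarrow> \<mu> > 0"
  shows "has_bochner_integral lborel
           (\<lambda>t. indicator {0<..} t * t powr (\<beta> - 1) * ((\<Sum>\<mu>\<in>M. exp (- t * \<mu>) *\<^sub>R P \<mu>) \<bullet> E))
           (Gamma \<beta> * ((\<Sum>\<mu>\<in>M. \<mu> powr (- \<beta>) *\<^sub>R P \<mu>) \<bullet> E))"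
proof -
  have "has_bochner_integral lborel
          (\<lambda>t. \<Sum>\<mu>\<in>M. indicator {0<..} t * t powr (\<beta> - 1) * exp (- t * \<mu>) * (P \<mu> \<bullet> E))
          (\<Sum>\<mu>\<in>M. Gamma \<beta> * \<mu> powr (- \<beta>) * (P \<mu> \<bullet> E))"
    using has_bochner_integral_Gamma_kernel[OF \<open>\<beta> > 0\<close> pos]
    by (intro has_bochner_integral_sum has_bochner_integral_mult_left)
  then show ?thesis
    by (simp add: inner_sum_left sum_distrib_left mult_ac)
qed

lemma has_bochner_integral_Sh_sg_inner:
  assumes "\<beta> > 0" and "\<And>\<mu>. \<mu> \<in> Lh_eigvals lam e V \<Longrightarrow> \<mu> > 0"
  shows "has_bochner_integral lborel
           (\<lambda>t. indicator {0<..} t * t powr (\<beta> - 1) * (Sh_sg lam e V t x \<bullet> E))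
           (Gamma \<beta> * (Lh_pow lam e V (- \<beta>) x \<bullet> E))"
  unfolding Sh_sg_def Lh_pow_def using assms by (rule has_bochner_integral_Balakrishnan_sum)

lemma has_bochner_integral_suminf:
  fixes f :: "nat \<Rightarrow> 'a \<Rightarrow> 'b::{banach,second_countable_topology}"
  assumes f: "\<And>i. has_bochner_integral M (f i) (x i)"
    and "AE t in M. summable (\<lambda>i. norm (f i t))"
    and "summable (\<lambda>i. \<integral>t. norm (f i t) \<partial>M)"
  shows "has_bochner_integral M (\<lambda>t. \<Sum>i. f i t) (\<Sum>i. x i)"
  using integrable_suminf[OF integrable.intros[OF f] assms(2,3)]
    integral_suminf[OF integrable.intros[OF f] assms(2,3)] has_bochner_integral_integral_eq[OF f]
  by (simp add: has_bochner_integral_iff)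

lemma has_bochner_integral_Balakrishnan_series:
  fixes lam a :: "nat \<Rightarrow> real"
  assumes "\<beta> > 0" "l0 > 0" and lam_ge: "\<And>j. l0 \<le> lam j" and abs_summable: "summable (\<lambda>j. \<bar>a j\<bar>)"
  shows "has_bochner_integral lborel
           (\<lambda>t. indicator {0<..} t * t powr (\<beta> - 1) * (\<Sum>j. exp (- t * lam j) * a j))
           (Gamma \<beta> * (\<Sum>j. lam j powr (- \<beta>) * a j))"
proof -
  define f where "f = (\<lambda>j t. indicator {0<..} t * t powr (\<beta> - 1) * exp (- t * lam j) * a j)"
  have lam_pos: "lam j > 0" for j using lam_ge[of j] \<open>l0 > 0\<close> by linarith
  have kernel: "has_bochner_integral lborel (\<lambda>t. indicator {0<..} t * t powr (\<beta> - 1) * exp (- t * lam j))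
                  (Gamma \<beta> * lam j powr (- \<beta>))" for j
    by (rule has_bochner_integral_Gamma_kernel[OF \<open>\<beta> > 0\<close> lam_pos])
  have lam_powr_le: "lam j powr (- \<beta>) \<le> l0 powr (- \<beta>)" for j
    using \<open>\<beta> > 0\<close> \<open>l0 > 0\<close> lam_ge[of j] by (intro powr_mono2') auto
  have coeff_abs_summable: "summable (\<lambda>j. \<bar>lam j powr (- \<beta>) * a j\<bar>)"
    by (rule summable_comparison_test'[OF summable_mult[OF abs_summable, of "l0 powr (- \<beta>)"]])
      (use lam_powr_le in \<open>simp add: abs_mult mult_right_mono\<close>)
  note coeff_summable = summable_rabs_cancel[OF coeff_abs_summable]
  have norm_f: "\<bar>f j t\<bar> = indicator {0<..} t * t powr (\<beta> - 1) * exp (- t * lam j) * \<bar>a j\<bar>" for j t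
    by (simp add: f_def abs_mult indicator_def)
  have "has_bochner_integral lborel (\<lambda>t. \<Sum>j. f j t) (\<Sum>j. Gamma \<beta> * lam j powr (- \<beta>) * a j)"
  proof (rule has_bochner_integral_suminf)
    show "has_bochner_integral lborel (f j) (Gamma \<beta> * lam j powr (- \<beta>) * a j)" for j
      unfolding f_def using kernel by auto
    show "AE t in lborel. summable (\<lambda>j. norm (f j t))"
    proof (intro AE_I2 summable_comparison_test'[OF summable_mult[OF abs_summable]])
      show "norm (norm (f j t)) \<le> indicator {0<..} t * t powr (\<beta> - 1) * \<bar>a j\<bar>" for j t
      proof (cases "t > 0")
        case True
        then have "t powr (\<beta> - 1) * exp (- t * lam j) * \<bar>a j\<bar> \<le> t powr (\<beta> - 1) * 1 * \<bar>a j\<bar>"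
          using lam_pos[of j] by (intro mult_right_mono mult_left_mono) auto
        then show ?thesis using True by (simp add: norm_f)
      qed (simp add: norm_f)
    qed
    have "(\<integral>t. norm (f j t) \<partial>lborel) = Gamma \<beta> * lam j powr (- \<beta>) * \<bar>a j\<bar>" for j
      using has_bochner_integral_integral_eq[OF kernel] by (simp add: norm_f)
    then show "summable (\<lambda>j. \<integral>t. norm (f j t) \<partial>lborel)"
      using summable_mult[OF coeff_abs_summable, of "Gamma \<beta>"] \<open>\<beta> > 0\<close>
      by (simp add: abs_mult mult.assoc)
  qed
  moreover have "(\<Sum>j. f j t) = indicator {0<..} t * t powr (\<beta> - 1) * (\<Sum>j. exp (- t * lam j) * a j)" for t
  proof -
    have "summable (\<lambda>j. exp (- t * lam j) * a j)" if "t > 0"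
    proof (rule summable_comparison_test'[OF abs_summable])
      show "norm (exp (- t * lam j) * a j) \<le> \<bar>a j\<bar>" for j
        using that lam_pos[of j] by (simp add: abs_mult mult_left_le_one_le)
    qed
    then show ?thesis
      by (cases "t > 0") (simp_all add: f_def suminf_mult[symmetric] mult.assoc)
  qed
  ultimately show ?thesis
    by (simp add: suminf_mult[OF coeff_summable] mult.assoc)
qed

lemma has_bochner_integral_S_sg_inner:
  fixes e :: "nat \<Rightarrow> 'a::{real_inner,complete_space}"
  assumes orthonormal: "\<And>i j. e i \<bullet> e j = (if i = j then 1 else 0)"
    and complete: "\<And>x. (\<lambda>j. (x \<bullet> e j) *\<^sub>R e j) sums x"
    and "\<beta> > 0" "l0 > 0" and lam_ge: "\<And>j. l0 \<le> lam j"
  shows "has_bochner_integral lborel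
           (\<lambda>t. indicator {0<..} t * t powr (\<beta> - 1) * (S_sg lam e t g \<bullet> E))
           (Gamma \<beta> * (L_pow lam e (- \<beta>) g \<bullet> E))"
proof -
  define a where "a = (\<lambda>j. (g \<bullet> e j) * (E \<bullet> e j))"
  have L_pow_inner: "L_pow lam e (- \<beta>) g \<bullet> E = (\<Sum>j. lam j powr (- \<beta>) * a j)"
  proof -
    have "\<bar>lam j powr (- \<beta>)\<bar> \<le> l0 powr (- \<beta>)" for j
      using \<open>\<beta> > 0\<close> \<open>l0 > 0\<close> lam_ge[of j] by (auto intro: powr_mono2')
    from sums_inner_orthonormal_multiplier[OF orthonormal complete this] show ?thesis
      by (simp add: L_pow_def a_def sums_iff)
  qed
  have S_sg_inner: "S_sg lam e t g \<bullet> E = (\<Sum>j. exp (- t * lam j) * a j)" if "t > 0" for t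
  proof -
    have "\<bar>exp (- t * lam j)\<bar> \<le> 1" for j
      using that \<open>l0 > 0\<close> lam_ge[of j] by simp
    from sums_inner_orthonormal_multiplier[OF orthonormal complete this] show ?thesis
      by (simp add: S_sg_def a_def sums_iff)
  qed
  have "has_bochner_integral lborel
          (\<lambda>t. indicator {0<..} t * t powr (\<beta> - 1) * (\<Sum>j. exp (- t * lam j) * a j))
          (Gamma \<beta> * (L_pow lam e (- \<beta>) g \<bullet> E))"
    unfolding L_pow_inner a_def
    using summable_abs_coeff_products[OF orthonormal complete]
    by (intro has_bochner_integral_Balakrishnan_series[OF \<open>\<beta> > 0\<close> \<open>l0 > 0\<close> lam_ge])
  then show ?thesis
    by (rule has_bochner_integral_cong[THEN iffD1, rotated -1])
      (auto simp: S_sg_inner indicator_def)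
qed

lemma norm_diff_le_Balakrishnan_integral:
  fixes u w :: "real \<Rightarrow> 'a::real_inner"
  assumes "\<beta> > 0"
    and u: "\<And>E. has_bochner_integral lborel
              (\<lambda>t. indicator {0<..} t * t powr (\<beta> - 1) * (u t \<bullet> E)) (Gamma \<beta> * (A \<bullet> E))"
    and w: "\<And>E. has_bochner_integral lborel
              (\<lambda>t. indicator {0<..} t * t powr (\<beta> - 1) * (w t \<bullet> E)) (Gamma \<beta> * (B \<bullet> E))"
    and F: "\<And>t. t > 0 \<Longrightarrow> norm (u t - w t) \<le> F t"
    and F_integrable: "integrable lborel (\<lambda>t. indicator {0<..} t * t powr (\<beta> - 1) * F t)"
  shows "norm (A - B) \<le> (\<integral>t. indicator {0<..} t * t powr (\<beta> - 1) * F t \<partial>lborel) / Gamma \<beta>"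
proof -
  define E where "E = A - B"
  define k where "k = (\<lambda>t::real. indicator {0<..} t * t powr (\<beta> - 1) :: real)"
  define I where "I = (\<integral>t. k t * F t \<partial>lborel)"
  have "Gamma \<beta> > 0" using \<open>\<beta> > 0\<close> by (rule Gamma_real_pos)
  have diff: "has_bochner_integral lborel (\<lambda>t. k t * ((u t - w t) \<bullet> E)) (Gamma \<beta> * (norm E)\<^sup>2)"
    using has_bochner_integral_diff[OF u[of E] w[of E]]
    by (simp add: k_def E_def inner_diff_left right_diff_distrib power2_norm_eq_inner)
  then have diff_integrable: "integrable lborel (\<lambda>t. k t * ((u t - w t) \<bullet> E))"
    by (rule integrable.intros)
  have "Gamma \<beta> * (norm E)\<^sup>2 = (\<integral>t. k t * ((u t - w t) \<bullet> E) \<partial>lborel)"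
    using diff by (simp add: has_bochner_integral_integral_eq)
  also have "\<dots> \<le> (\<integral>t. k t * F t * norm E \<partial>lborel)"
  proof (rule integral_mono[OF diff_integrable])
    show "integrable lborel (\<lambda>t. k t * F t * norm E)"
      using F_integrable by (simp add: k_def)
    show "k t * ((u t - w t) \<bullet> E) \<le> k t * F t * norm E" for t
    proof (cases "t > 0")
      case True
      have "(u t - w t) \<bullet> E \<le> F t * norm E"
        by (rule order_trans[OF norm_cauchy_schwarz mult_right_mono[OF F[OF True] norm_ge_zero]])
      then show ?thesis using True by (simp add: k_def mult.assoc)
    qed (simp add: k_def)
  qed
  also have "\<dots> = I * norm E" by (simp add: I_def)
  finally have estimate: "Gamma \<beta> * (norm E)\<^sup>2 \<le> I * norm E" .
  have "I \<ge> 0"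
    unfolding I_def k_def
    using F[THEN order_trans[OF norm_ge_zero]] by (intro integral_nonneg_AE) (auto simp: indicator_def)
  have "norm E \<le> I / Gamma \<beta>"
  proof (cases "norm E = 0")
    case True
    then show ?thesis using \<open>I \<ge> 0\<close> \<open>Gamma \<beta> > 0\<close> by simp
  next
    case False
    then have "Gamma \<beta> * norm E \<le> I"
      using estimate by (simp add: power2_eq_square mult.assoc[symmetric])
    then show ?thesis using \<open>Gamma \<beta> > 0\<close> by (simp add: pos_le_divide_eq mult.commute)
  qed
  then show ?thesis by (simp add: E_def I_def k_def)
qed

lemma fractional_power_error_le:
  fixes e :: "nat \<Rightarrow> 'a::{real_inner,complete_space}"
  assumes orthonormal: "\<And>i j. e i \<bullet> e j = (if i = j then 1 else 0)"
    and complete: "\<And>x. (\<lambda>j. (x \<bullet> e j) *\<^sub>R e j) sums x"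
    and "\<beta> > 0" "l0 > 0" and lam_ge: "\<And>j. l0 \<le> lam j"
    and "finite B" and H1: "span B \<subseteq> {x. hdot_mem lam e 1 x}"
    and bound: "\<And>t. t > 0 \<Longrightarrow> norm (S_sg lam e t g - Sh_sg lam e (span B) t x) \<le> c * \<kappa> t"
    and \<kappa>_integrable: "integrable lborel (\<lambda>t. indicator {0<..} t * t powr (\<beta> - 1) * \<kappa> t)"
  shows "norm (L_pow lam e (- \<beta>) g - Lh_pow lam e (span B) (- \<beta>) x)
           \<le> c * ((\<integral>t. indicator {0<..} t * t powr (\<beta> - 1) * \<kappa> t \<partial>lborel) / Gamma \<beta>)"
proof -
  have "lam j > 0" for j using lam_ge[of j] \<open>l0 > 0\<close> by linarith
  then have "\<mu> > 0" if "\<mu> \<in> Lh_eigvals lam e (span B)" for \<mu>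
    using Lh_eigval_pos[OF _ \<open>finite B\<close> H1 complete that] by blast
  then have "norm (L_pow lam e (- \<beta>) g - Lh_pow lam e (span B) (- \<beta>) x)
      \<le> (\<integral>t. indicator {0<..} t * t powr (\<beta> - 1) * (c * \<kappa> t) \<partial>lborel) / Gamma \<beta>"
    using integrable_mult_right[OF \<kappa>_integrable, of c]
    by (intro norm_diff_le_Balakrishnan_integral[OF \<open>\<beta> > 0\<close> _ _ bound]
        has_bochner_integral_S_sg_inner[OF orthonormal complete \<open>\<beta> > 0\<close> \<open>l0 > 0\<close> lam_ge]
        has_bochner_integral_Sh_sg_inner[OF \<open>\<beta> > 0\<close>]) (simp_all add: mult_ac)
  also have "(\<integral>t. indicator {0<..} t * t powr (\<beta> - 1) * (c * \<kappa> t) \<partial>lborel)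
      = c * (\<integral>t. indicator {0<..} t * t powr (\<beta> - 1) * \<kappa> t \<partial>lborel)"
    unfolding integral_mult_right_zero[symmetric] by (simp add: mult_ac)
  finally show ?thesis by simp
qed

section \<open>Splitting the semigroup error at t = 1\<close>

lemma integrable_powr_near_0:
  fixes q :: real
  assumes "q > -1"
  shows "integrable lborel (\<lambda>t. indicator {0<..1} t * t powr q)"
proof -
  have "(\<lambda>t. t powr q) integrable_on {0<..1::real}"
    using assms by (intro integrable_on_powr_from_0') auto
  then have "set_integrable lebesgue {0<..1::real} (\<lambda>t. t powr q)"
    by (rule nonnegative_absolutely_integrable_1) auto
  then have "integrable lebesgue (\<lambda>t. indicator {0<..1::real} t * t powr q)"
    by (simp add: set_integrable_def)
  then show ?thesis by (simp add: integrable_completion)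
qed

lemma integrable_powr_at_top:
  fixes q :: real
  assumes "q < -1"
  shows "integrable lborel (\<lambda>t. indicator {1<..} t * t powr q)"
proof -
  have "(\<lambda>t. t powr q) integrable_on {1::real..}"
    using has_integral_powr_to_inf[OF assms, of 1] by (auto simp: integrable_on_def)
  then have "set_integrable lebesgue {1::real..} (\<lambda>t. t powr q)"
    by (rule nonnegative_absolutely_integrable_1) auto
  then have "set_integrable lebesgue {1::real<..} (\<lambda>t. t powr q)"
    by (rule set_integrable_subset) auto
  then have "integrable lebesgue (\<lambda>t. indicator {1::real<..} t * t powr q)"
    by (simp add: set_integrable_def)
  then show ?thesis by (simp add: integrable_completion)
qed

lemma integrable_two_regime_powr_kernel:
  fixes \<beta> p q A B :: real
  assumes "\<beta> - 1 + p > -1" "\<beta> - 1 + q < -1"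
  shows "integrable lborel
           (\<lambda>t. indicator {0<..} t * t powr (\<beta> - 1) * (if t \<le> 1 then A * t powr p else B * t powr q))"
proof -
  have "integrable lborel (\<lambda>t. A * (indicator {0<..1} t * t powr (\<beta> - 1 + p))
                              + B * (indicator {1<..} t * t powr (\<beta> - 1 + q)))"
    using integrable_powr_near_0[OF assms(1)] integrable_powr_at_top[OF assms(2)] by simp
  then show ?thesis
    by (rule Bochner_Integration.integrable_cong[THEN iffD1, rotated -1])
      (auto simp: indicator_def powr_add)
qed

lemma hdot_embedding:
  fixes e :: "nat \<Rightarrow> 'a::real_inner"
  assumes "l0 > 0" and lam_ge: "\<And>j. l0 \<le> lam j" and "0 \<le> \<sigma>" "\<sigma> \<le> \<theta>"
    and g: "hdot_mem lam e \<theta> g"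
  shows "hdot_mem lam e \<sigma> g"
    and "hdot_norm lam e \<sigma> g \<le> l0 powr ((\<sigma> - \<theta>) / 2) * hdot_norm lam e \<theta> g"
proof -
  have termwise: "lam j powr \<sigma> * (g \<bullet> e j)\<^sup>2 \<le> l0 powr (\<sigma> - \<theta>) * (lam j powr \<theta> * (g \<bullet> e j)\<^sup>2)" for j
  proof -
    have "lam j powr \<sigma> = lam j powr (\<sigma> - \<theta>) * lam j powr \<theta>"
      by (simp add: powr_add[symmetric])
    also have "\<dots> \<le> l0 powr (\<sigma> - \<theta>) * lam j powr \<theta>"
      using assms(1,3,4) lam_ge[of j] by (intro mult_right_mono powr_mono2') auto
    finally show ?thesis by (simp add: mult_right_mono mult.assoc[symmetric])
  qed
  have summable_\<theta>: "summable (\<lambda>j. lam j powr \<theta> * (g \<bullet> e j)\<^sup>2)" using g by (simp add: hdot_mem_def)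
  have summable_\<sigma>: "summable (\<lambda>j. lam j powr \<sigma> * (g \<bullet> e j)\<^sup>2)"
    by (rule summable_comparison_test'[OF summable_mult[OF summable_\<theta>, of "l0 powr (\<sigma> - \<theta>)"]])
      (simp add: termwise)
  then show "hdot_mem lam e \<sigma> g" by (simp add: hdot_mem_def)
  have "(\<Sum>j. lam j powr \<sigma> * (g \<bullet> e j)\<^sup>2) \<le> l0 powr (\<sigma> - \<theta>) * (\<Sum>j. lam j powr \<theta> * (g \<bullet> e j)\<^sup>2)"
    unfolding suminf_mult[OF summable_\<theta>, symmetric]
    by (intro suminf_le termwise summable_\<sigma> summable_mult summable_\<theta>)
  then have "hdot_norm lam e \<sigma> g \<le> sqrt (l0 powr (\<sigma> - \<theta>)) * hdot_norm lam e \<theta> g"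
    unfolding hdot_norm_def real_sqrt_mult[symmetric] by (rule real_sqrt_le_mono)
  also have "sqrt (l0 powr (\<sigma> - \<theta>)) = l0 powr ((\<sigma> - \<theta>) / 2)"
    using \<open>l0 > 0\<close> by (simp add: powr_half_sqrt[symmetric] powr_powr)
  finally show "hdot_norm lam e \<sigma> g \<le> l0 powr ((\<sigma> - \<theta>) / 2) * hdot_norm lam e \<theta> g" .
qed

lemma hdot_norm_nonneg: "hdot_mem lam e \<sigma> g \<Longrightarrow> hdot_norm lam e \<sigma> g \<ge> 0"
  by (simp add: hdot_norm_def hdot_mem_def suminf_nonneg)

lemma semigroup_error_le_kernel:
  fixes e :: "nat \<Rightarrow> 'a::real_inner" and err :: real
  assumes "l0 > 0" "\<And>j. l0 \<le> lam j" and g: "hdot_mem lam e \<theta> g"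
    and "0 \<le> \<sigma>" "\<sigma> \<le> \<theta>" "0 \<le> \<theta>" "0 < h" "h \<le> 1" "r \<le> s" "C3a \<ge> 0" "C3b \<ge> 0" "t > 0"
    and near: "hdot_mem lam e \<sigma> g \<Longrightarrow>
                 err \<le> C3a * h powr r * t powr ((\<sigma> - r) / 2) * hdot_norm lam e \<sigma> g"
    and far: "hdot_mem lam e 0 g \<Longrightarrow>
                 err \<le> C3b * h powr s * t powr ((0 - s) / 2) * hdot_norm lam e 0 g"
  shows "err \<le> h powr r * hdot_norm lam e \<theta> g *
           (if t \<le> 1 then C3a * l0 powr ((\<sigma> - \<theta>) / 2) * t powr ((\<sigma> - r) / 2)
            else C3b * l0 powr ((0 - \<theta>) / 2) * t powr ((0 - s) / 2))"
proof (cases "t \<le> 1")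
  case True
  note embed = hdot_embedding[OF assms(1,2,4,5) g]
  have "err \<le> C3a * h powr r * t powr ((\<sigma> - r) / 2) * (l0 powr ((\<sigma> - \<theta>) / 2) * hdot_norm lam e \<theta> g)"
    using near[OF embed(1)] embed(2) \<open>C3a \<ge> 0\<close>
    by (meson mult_left_mono order_trans powr_ge_zero mult_nonneg_nonneg)
  then show ?thesis using True by (simp add: mult_ac)
next
  case False
  note embed = hdot_embedding[OF assms(1,2) order_refl \<open>0 \<le> \<theta>\<close> g]
  have "h powr s \<le> h powr r"
    using assms(7-9) by (intro powr_mono') auto
  then have "err \<le> C3b * h powr r * t powr ((0 - s) / 2) * (l0 powr ((0 - \<theta>) / 2) * hdot_norm lam e \<theta> g)"
    using far[OF embed(1)] embed(2) \<open>C3b \<ge> 0\<close> hdot_norm_nonneg[OF embed(1)]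
    by (smt (verit) mult_left_mono mult_right_mono powr_ge_zero mult_nonneg_nonneg)
  then show ?thesis using False by (simp add: mult_ac)
qed

lemma theta_choice_bounds:
  fixes x s \<beta> \<theta> :: real
  assumes "(x - 2 * \<beta> \<ge> 0 \<longrightarrow> \<theta> > min (x - 2 * \<beta>) (s - 2 * \<beta>)) \<and> (x - 2 * \<beta> < 0 \<longrightarrow> \<theta> = 0)"
    and "s > 2 * \<beta>"
  shows "0 \<le> \<theta>" and "min x s - 2 * \<beta> < \<theta>"
  using assms by (cases "x - 2 * \<beta> \<ge> 0"; auto)+

lemma fractional_power_error_bound:
  fixes e :: "nat \<Rightarrow> 'a::{real_inner,complete_space}"
  assumes orthonormal: "\<And>i j. e i \<bullet> e j = (if i = j then 1 else 0)"
    and complete: "\<And>x. (\<lambda>j. (x \<bullet> e j) *\<^sub>R e j) sums x"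
    and "\<beta> > 0" "l0 > 0" and lam_ge: "\<And>j. l0 \<le> lam j"
    and V: "\<And>h. 0 < h \<Longrightarrow> h < h0 \<Longrightarrow> \<exists>B. finite B \<and> V h = span B \<and> span B \<subseteq> {x. hdot_mem lam e 1 x}"
    and "h0 \<le> 1" "0 \<le> \<sigma>" "\<sigma> \<le> \<theta>" "r \<le> s" "r - \<sigma> < 2 * \<beta>" "2 * \<beta> < s"
    and near: "\<exists>C3>0. \<forall>t g h. 0 < t \<and> hdot_mem lam e \<sigma> g \<and> 0 < h \<and> h < h0 \<longrightarrow>
          norm (S_sg lam e t g - Sh_sg lam e (V h) t (proj (V h) g))
            \<le> C3 * h powr r * t powr ((\<sigma> - r) / 2) * hdot_norm lam e \<sigma> g"
    and far: "\<exists>C3>0. \<forall>t g h. 0 < t \<and> hdot_mem lam e 0 g \<and> 0 < h \<and> h < h0 \<longrightarrow>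
          norm (S_sg lam e t g - Sh_sg lam e (V h) t (proj (V h) g))
            \<le> C3 * h powr s * t powr ((0 - s) / 2) * hdot_norm lam e 0 g"
  shows "\<exists>C>0. \<forall>h g. 0 < h \<and> h < h0 \<and> hdot_mem lam e \<theta> g \<longrightarrow>
           norm (L_pow lam e (- \<beta>) g - Lh_pow lam e (V h) (- \<beta>) (proj (V h) g))
             \<le> C * h powr r * hdot_norm lam e \<theta> g"
proof -
  obtain C3a where "C3a > 0" and near': "\<And>t g h. 0 < t \<Longrightarrow> 0 < h \<Longrightarrow> h < h0 \<Longrightarrow>
      hdot_mem lam e \<sigma> g \<Longrightarrow> norm (S_sg lam e t g - Sh_sg lam e (V h) t (proj (V h) g))
        \<le> C3a * h powr r * t powr ((\<sigma> - r) / 2) * hdot_norm lam e \<sigma> g"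
    using near by blast
  obtain C3b where "C3b > 0" and far': "\<And>t g h. 0 < t \<Longrightarrow> 0 < h \<Longrightarrow> h < h0 \<Longrightarrow>
      hdot_mem lam e 0 g \<Longrightarrow> norm (S_sg lam e t g - Sh_sg lam e (V h) t (proj (V h) g))
        \<le> C3b * h powr s * t powr ((0 - s) / 2) * hdot_norm lam e 0 g"
    using far by blast
  define \<kappa> where "\<kappa> = (\<lambda>t::real. if t \<le> 1 then C3a * l0 powr ((\<sigma> - \<theta>) / 2) * t powr ((\<sigma> - r) / 2)
                               else C3b * l0 powr ((0 - \<theta>) / 2) * t powr ((0 - s) / 2))"
  define K where "K = (\<integral>t. indicator {0<..} t * t powr (\<beta> - 1) * \<kappa> t \<partial>lborel) / Gamma \<beta>"
  have \<kappa>_integrable: "integrable lborel (\<lambda>t. indicator {0<..} t * t powr (\<beta> - 1) * \<kappa> t)"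
    unfolding \<kappa>_def using \<open>r - \<sigma> < 2 * \<beta>\<close> \<open>2 * \<beta> < s\<close> by (intro integrable_two_regime_powr_kernel) (auto simp: field_simps)
  have "norm (L_pow lam e (- \<beta>) g - Lh_pow lam e (V h) (- \<beta>) (proj (V h) g))
      \<le> (\<bar>K\<bar> + 1) * h powr r * hdot_norm lam e \<theta> g"
    if h: "0 < h" "h < h0" and g: "hdot_mem lam e \<theta> g" for h g
  proof -
    obtain B where "finite B" "V h = span B" and H1: "span B \<subseteq> {x. hdot_mem lam e 1 x}"
      using V[OF h] by blast
    have "norm (S_sg lam e t g - Sh_sg lam e (span B) t (proj (span B) g))
        \<le> (h powr r * hdot_norm lam e \<theta> g) * \<kappa> t" if "t > 0" for t
      unfolding \<kappa>_def \<open>V h = span B\<close>[symmetric]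
      using \<open>h0 \<le> 1\<close> h \<open>C3a > 0\<close> \<open>C3b > 0\<close> \<open>0 \<le> \<sigma>\<close> \<open>\<sigma> \<le> \<theta>\<close>
      by (intro semigroup_error_le_kernel[OF \<open>l0 > 0\<close> lam_ge g \<open>0 \<le> \<sigma>\<close> \<open>\<sigma> \<le> \<theta>\<close> _ h(1) _ \<open>r \<le> s\<close>
            _ _ that near'[OF that h] far'[OF that h]]) auto
    then have "norm (L_pow lam e (- \<beta>) g - Lh_pow lam e (V h) (- \<beta>) (proj (V h) g))
        \<le> (h powr r * hdot_norm lam e \<theta> g) * K"
      unfolding K_def \<open>V h = span B\<close>
      by (rule fractional_power_error_le[OF orthonormal complete \<open>\<beta> > 0\<close> \<open>l0 > 0\<close> lam_ge
            \<open>finite B\<close> H1 _ \<kappa>_integrable])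
    also have "\<dots> \<le> (h powr r * hdot_norm lam e \<theta> g) * (\<bar>K\<bar> + 1)"
      using hdot_norm_nonneg[OF g] by (intro mult_left_mono) auto
    finally show ?thesis by (simp add: mult_ac)
  qed
  then show ?thesis by (intro exI[of _ "\<bar>K\<bar> + 1"]) auto
qed

theorem lemma3p3:
  fixes e :: "nat \<Rightarrow> 'a::{real_inner,complete_space}"
    and lam :: "nat \<Rightarrow> real"
    and V :: "real \<Rightarrow> 'a set"
    and \<alpha> \<beta> c_lam C_lam h0 s \<theta> :: real
    and d :: nat
  assumes orthonormal: "\<And>i j. e i \<bullet> e j = (if i = j then 1 else 0)"
    and complete: "\<And>x. (\<lambda>j. (x \<bullet> e j) *\<^sub>R e j) sums x"
    and lam_mono: "mono lam"
    and alpha_pos: "\<alpha> > 0" and c_pos: "c_lam > 0" and C_pos: "C_lam > 0"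
    and lam_bounds: "\<And>j. c_lam * real (Suc j) powr \<alpha> \<le> lam j \<and> lam j \<le> C_lam * real (Suc j) powr \<alpha>"
    and beta: "0 < \<beta>" "\<beta> < 1" and two_alpha_beta: "2 * \<alpha> * \<beta> > 1"
    and Vh_subspace: "\<And>h. 0 < h \<Longrightarrow> h < 1 \<Longrightarrow> subspace (V h)"
    and Vh_findim: "\<And>h. 0 < h \<Longrightarrow> h < 1 \<Longrightarrow> \<exists>B. finite B \<and> V h = span B"
    and Vh_H1: "\<And>h. 0 < h \<Longrightarrow> h < 1 \<Longrightarrow> V h \<subseteq> {x. hdot_mem lam e 1 x}"
    and Vh_dim: "\<exists>c1 c2. c1 > 0 \<and> c2 > 0 \<and> (\<forall>h. 0 < h \<and> h < 1 \<longrightarrow>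
                   c1 * h powr (- real d) \<le> real (dim (V h)) \<and> real (dim (V h)) \<le> c2 * h powr (- real d))"
    and h0_bounds: "0 < h0" "h0 < 1"
    and s_gt: "s > 2 * \<beta>"
    and cond_iv: "\<And>th \<sigma>. 0 \<le> th \<Longrightarrow> th \<le> \<sigma> \<Longrightarrow> \<sigma> \<le> s \<Longrightarrow>
        \<exists>C3>0. \<forall>t g h. 0 < t \<and> hdot_mem lam e th g \<and> 0 < h \<and> h < h0 \<longrightarrow>
          norm (S_sg lam e t g - Sh_sg lam e (V h) t (proj (V h) g))
            \<le> C3 * h powr \<sigma> * t powr ((th - \<sigma>) / 2) * hdot_norm lam e th g"
    and theta_choice: "let theta_star = real d * (2 * \<alpha> * \<beta> - 1) - 2 * \<beta> in
        (theta_star \<ge> 0 \<longrightarrow> \<theta> > min theta_star (s - 2 * \<beta>)) \<and> (theta_star < 0 \<longrightarrow> \<theta> = 0)"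
  shows "\<exists>C>0. \<exists>h1>0. \<forall>h g. 0 < h \<and> h < h1 \<and> h < h0 \<and> hdot_mem lam e \<theta> g \<longrightarrow>
           norm (L_pow lam e (- \<beta>) g - Lh_pow lam e (V h) (- \<beta>) (proj (V h) g))
             \<le> C * h powr (min (real d * (2 * \<alpha> * \<beta> - 1)) s) * hdot_norm lam e \<theta> g"
proof -
  \<comment> \<open>Only (iv) at the index pairs (min theta r, r) and (0, s) enters.\<close>
  have lam_pos: "lam j > 0" for j
  proof -
    have "c_lam * real (Suc j) powr \<alpha> > 0" using c_pos by simp
    then show ?thesis using lam_bounds[of j] by linarith
  qed
  define l0 where "l0 = lam 0"
  have "l0 > 0" and lam_ge: "\<And>j. l0 \<le> lam j"
    using lam_pos lam_mono by (simp_all add: l0_def monoD)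
  define r where "r = min (real d * (2 * \<alpha> * \<beta> - 1)) s"
  have "0 \<le> \<theta>" "r - 2 * \<beta> < \<theta>"
    using theta_choice_bounds[where x = "real d * (2 * \<alpha> * \<beta> - 1)"] theta_choice s_gt
    by (simp_all add: Let_def r_def)
  have "0 \<le> r" "r \<le> s" using two_alpha_beta s_gt beta by (simp_all add: r_def)
  then have "0 \<le> min \<theta> r" "min \<theta> r \<le> \<theta>" "min \<theta> r \<le> r" "r - min \<theta> r < 2 * \<beta>"
    using \<open>0 \<le> \<theta>\<close> \<open>r - 2 * \<beta> < \<theta>\<close> beta by auto
  have V: "\<exists>B. finite B \<and> V h = span B \<and> span B \<subseteq> {x. hdot_mem lam e 1 x}" if "0 < h" "h < h0" for h
  proof -
    have "h < 1" using that h0_bounds by linarith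
    then show ?thesis using Vh_findim[OF \<open>0 < h\<close>] Vh_H1[OF \<open>0 < h\<close>] by blast
  qed
  have "\<exists>C>0. \<forall>h g. 0 < h \<and> h < h0 \<and> hdot_mem lam e \<theta> g \<longrightarrow>
      norm (L_pow lam e (- \<beta>) g - Lh_pow lam e (V h) (- \<beta>) (proj (V h) g))
        \<le> C * h powr r * hdot_norm lam e \<theta> g"
    using h0_bounds s_gt beta
    by (intro fractional_power_error_bound[OF orthonormal complete beta(1) \<open>l0 > 0\<close> lam_ge V _
          \<open>0 \<le> min \<theta> r\<close> \<open>min \<theta> r \<le> \<theta>\<close> \<open>r \<le> s\<close> \<open>r - min \<theta> r < 2 * \<beta>\<close> s_gt
          cond_iv[OF \<open>0 \<le> min \<theta> r\<close> \<open>min \<theta> r \<le> r\<close> \<open>r \<le> s\<close>] cond_iv[of 0 s]]) auto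
  then show ?thesis
    using h0_bounds by (auto simp: r_def)
qed

end
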